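(* Fix integers $k\ge 3$ and $r\ge 1$. For integers $a\ge 0$, $0\le b\le r$ and a finite list $L=[l_1,\dots,l_t]$ ($t\ge 0$) of positive integers, let $A(r,a,b,L)$ be the number of words $w$ over the positive integers that contain exactly $r$ copies of each of the letters $1,\dots,a$, exactly $b$ copies of the letter $a+1$, exactly $l_j$ copies of the letter $a+1+j$ for $1\le j\le t$, and no other letters, such that both $w$ and the word $(a+1)w$ (obtained by prepending the letter $a+1$) avoid both patterns $123$ and $1k(k-1)\cdots 2$. (The empty word is counted.) For a list $L$, let $R(L)$ be the list obtained by deleting all entries equal to $0$. Suppose $b\ge 1$ and $t\le k-2$. Then $$A(r,a,b,L)=\sum_{i=\max(1,\ a-(k-2)+t+1)}^{a} A\big(r,\ i-1,\ r-1,\ [\underbrace{r,\dots,r}_{a-i\text{ copies}},\ b,\ l_1,\dots,l_t]\big)\ +\ A(r,a,b-1,L)\ +\ \delta_{t\ge 1}\,A\big(r,a,b,R([l_1,\dots,l_{t-1},l_t-1])\big),$$ where the sum is empty if its lower limit exceeds $a$, and $\delta_{t\ge1}$ equals $1$ if $t\ge 1$ and $0$ if $t=0$.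
   Context: A word $w_1\cdots w_m$ over the positive integers contains a pattern $p_1\cdots p_k$ if there are indices $i_1<\dots<i_k$ such that for all $r,s$: $w_{i_r}<w_{i_s}\iff p_r<p_s$ and $w_{i_r}>w_{i_s}\iff p_r>p_s$; otherwise it avoids it. The pattern $1k(k-1)\cdots 2$ is the permutation of length $k$ whose first entry is $1$ followed by $k,k-1,\dots,2$ in decreasing order (for $k=3$ it is $132$). *)

theory Defs
  imports Main
begin

definition contains :: "nat list \<Rightarrow> nat list \<Rightarrow> bool" where
  "contains w p \<longleftrightarrow> (\<exists>is :: nat list.
      length is = length p \<and> sorted_wrt (<) is \<and> (\<forall>i\<in>set is. i < length w) \<and>
      (\<forall>r < length p. \<forall>s < length p.
         (w ! (is ! r) < w ! (is ! s) \<longleftrightarrow> p ! r < p ! s) \<and>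
         (w ! (is ! r) > w ! (is ! s) \<longleftrightarrow> p ! r > p ! s)))"

definition avoids :: "nat list \<Rightarrow> nat list \<Rightarrow> bool" where
  "avoids w p \<longleftrightarrow> \<not> contains w p"

definition pat_1k :: "nat \<Rightarrow> nat list" where
  "pat_1k k = 1 # rev [2..<Suc k]"

definition mult :: "nat \<Rightarrow> nat \<Rightarrow> nat \<Rightarrow> nat list \<Rightarrow> nat \<Rightarrow> nat" where
  "mult r a b L c =
     (if 1 \<le> c \<and> c \<le> a then r
      else if c = a + 1 then b
      else if a + 2 \<le> c \<and> c \<le> a + 1 + length L then L ! (c - (a + 2))
      else 0)"

definition good_words :: "nat \<Rightarrow> nat \<Rightarrow> nat \<Rightarrow> nat \<Rightarrow> nat list \<Rightarrow> nat list set" where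
  "good_words k r a b L = {w. (\<forall>c. count_list w c = mult r a b L c) \<and>
      avoids w [1,2,3] \<and> avoids w (pat_1k k) \<and>
      avoids ((a + 1) # w) [1,2,3] \<and> avoids ((a + 1) # w) (pat_1k k)}"

definition A :: "nat \<Rightarrow> nat \<Rightarrow> nat \<Rightarrow> nat \<Rightarrow> nat list \<Rightarrow> nat" where
  "A k r a b L = card (good_words k r a b L)"

definition Rdel :: "nat list \<Rightarrow> nat list" where
  "Rdel L = filter (\<lambda>x. x \<noteq> 0) L"

end

theory Submission
  imports Defs "HOL-Library.Sublist"
begin

(*
  Split a word w = x w' of the family A(r,a,b,L) by its first letter x.  Both patterns
  begin with their strict minimum, so prepending a letter to a word whose first letter
  is not larger never creates an occurrence.  Hence for x <= a+1 the condition on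
  (a+1) x w' follows from the one on x w', which is the condition defining A with
  a+1 replaced by x; this produces the terms A(r, x-1, r-1, [r,...,r,b,L]) and
  A(r, a, b-1, L).  A first letter x > a+1 must be the largest letter a+1+t, for
  otherwise (a+1) x (a+1+t) is a 123; deleting it from (a+1) x w' loses no occurrence,
  because every other letter is at most x and fewer than k-2 letters lie strictly
  between a+1 and x, and this gives the last term.  Finally, the letters of w' larger than x occur in
  decreasing order (else x starts a 123), so there are at most k-2 of them; since all
  of x+1, ..., a+1+t occur, x >= a+t+3-k, which is the lower summation limit.
*)

definition order_isomorphic :: "'a::linorder list \<Rightarrow> 'b::linorder list \<Rightarrow> bool" where
  "order_isomorphic q p \<longleftrightarrow> length q = length p \<and>
     (\<forall>r < length p. \<forall>s < length p. q ! r < q ! s \<longleftrightarrow> p ! r < p ! s)"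

lemma subseq_iff_nth_indices:
  "subseq q w \<longleftrightarrow>
     (\<exists>ns. sorted_wrt (<) ns \<and> (\<forall>i\<in>set ns. i < length w) \<and> q = map ((!) w) ns)"
proof
  assume "subseq q w"
  then show "\<exists>ns. sorted_wrt (<) ns \<and> (\<forall>i\<in>set ns. i < length w) \<and> q = map ((!) w) ns"
  proof (induction rule: list_emb.induct)
    case (list_emb_Nil ys)
    show ?case by (intro exI[of _ "[]"]) simp
  next
    case (list_emb_Cons xs ys y)
    then obtain ns where "sorted_wrt (<) ns" "\<forall>i\<in>set ns. i < length ys" "xs = map ((!) ys) ns"
      by blast
    then show ?case by (intro exI[of _ "map Suc ns"]) (auto simp: sorted_wrt_map)
  next
    case (list_emb_Cons2 x y xs ys)
    then obtain ns where "sorted_wrt (<) ns" "\<forall>i\<in>set ns. i < length ys" "xs = map ((!) ys) ns"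
      by blast
    then show ?case using list_emb_Cons2.hyps
      by (intro exI[of _ "0 # map Suc ns"]) (auto simp: sorted_wrt_map)
  qed
next
  assume "\<exists>ns. sorted_wrt (<) ns \<and> (\<forall>i\<in>set ns. i < length w) \<and> q = map ((!) w) ns"
  then obtain ns where "sorted_wrt (<) ns" "\<forall>i\<in>set ns. i < length w" "q = map ((!) w) ns"
    by blast
  then have "subseq ns [0..<length w]"
    by (intro sorted_subset_imp_subseq) auto
  then have "subseq (map ((!) w) ns) (map ((!) w) [0..<length w])"
    by (rule subseq_map)
  then show "subseq q w"
    by (simp add: \<open>q = map ((!) w) ns\<close> map_nth)
qed

lemma set_mono_subseq: "subseq xs ys \<Longrightarrow> set xs \<subseteq> set ys"
  by (induction rule: list_emb.induct) auto

lemma subseq_Cons_self: "subseq xs (x # xs)"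
  by (rule list_emb_Cons) (rule subseq_order.refl)

lemma contains_iff_subseq: "contains w p \<longleftrightarrow> (\<exists>q. subseq q w \<and> order_isomorphic q p)"
proof
  assume "contains w p"
  then obtain ns where ns: "length ns = length p" "sorted_wrt (<) ns" "\<forall>i\<in>set ns. i < length w"
    "\<forall>r < length p. \<forall>s < length p. w ! (ns ! r) < w ! (ns ! s) \<longleftrightarrow> p ! r < p ! s"
    unfolding contains_def by blast
  then have "subseq (map ((!) w) ns) w" "order_isomorphic (map ((!) w) ns) p"
    by (auto simp: subseq_iff_nth_indices order_isomorphic_def)
  then show "\<exists>q. subseq q w \<and> order_isomorphic q p" by blast
next
  assume "\<exists>q. subseq q w \<and> order_isomorphic q p"
  then obtain ns where ns: "sorted_wrt (<) ns" "\<forall>i\<in>set ns. i < length w"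
    and iso: "order_isomorphic (map ((!) w) ns) p"
    unfolding subseq_iff_nth_indices by blast
  have "w ! (ns ! r) < w ! (ns ! s) \<longleftrightarrow> p ! r < p ! s" if "r < length p" "s < length p" for r s
    using iso that by (auto simp: order_isomorphic_def)
  then show "contains w p"
    unfolding contains_def using ns iso by (intro exI[of _ ns]) (auto simp: order_isomorphic_def)
qed

lemma contains_if_subseq: "subseq q w \<Longrightarrow> order_isomorphic q p \<Longrightarrow> contains w p"
  unfolding contains_iff_subseq by blast

lemma contains_subseq_mono: "subseq v w \<Longrightarrow> contains v p \<Longrightarrow> contains w p"
  by (meson contains_iff_subseq subseq_order.trans)

lemma order_isomorphic_Cons:
  "order_isomorphic (x # q) (y # p) \<longleftrightarrow> order_isomorphic q p \<and>
     (\<forall>i < length p. (x < q ! i \<longleftrightarrow> y < p ! i) \<and> (q ! i < x \<longleftrightarrow> p ! i < y))"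
  unfolding order_isomorphic_def by (auto simp: All_less_Suc2)

lemma sorted_wrt_greater_nth_less_iff:
  fixes xs :: "'a::linorder list"
  assumes "sorted_wrt (>) xs" "r < length xs" "s < length xs"
  shows "xs ! r < xs ! s \<longleftrightarrow> s < r"
  using assms by (metis linorder_neq_iff order.asym sorted_wrt_nth_less)

lemma order_isomorphic_decreasing:
  assumes "sorted_wrt (>) p"
  shows "order_isomorphic q p \<longleftrightarrow> length q = length p \<and> sorted_wrt (>) q"
proof
  assume "order_isomorphic q p"
  then show "length q = length p \<and> sorted_wrt (>) q"
    using assms by (auto simp: order_isomorphic_def sorted_wrt_iff_nth_less)
next
  assume "length q = length p \<and> sorted_wrt (>) q"
  then show "order_isomorphic q p"
    using assms by (simp add: order_isomorphic_def sorted_wrt_greater_nth_less_iff)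
qed

lemma order_isomorphic_Cons_below_decreasing:
  assumes "sorted_wrt (>) p" "\<forall>z\<in>set p. y < z"
  shows "order_isomorphic (x # q) (y # p) \<longleftrightarrow>
    length q = length p \<and> sorted_wrt (>) q \<and> (\<forall>z\<in>set q. x < z)"
proof -
  have "\<forall>i < length p. y < p ! i"
    using assms(2) by (simp add: all_set_conv_all_nth)
  then show ?thesis
    unfolding order_isomorphic_Cons order_isomorphic_decreasing[OF assms(1)]
    by (auto simp: all_set_conv_all_nth)
qed

lemma order_isomorphic_lower_head:
  assumes "order_isomorphic (x # q) (y # p)" "\<forall>z\<in>set p. y < z" "x' \<le> x"
  shows "order_isomorphic (x' # q) (y # p)"
proof -
  have "\<forall>i < length p. y < p ! i"
    using assms(2) by (simp add: all_set_conv_all_nth)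
  then show ?thesis
    using assms(1,3) by (auto simp: order_isomorphic_Cons)
qed

lemma order_isomorphic_123:
  "order_isomorphic q [1::nat, 2, 3] \<longleftrightarrow> (\<exists>a b c. q = [a, b, c] \<and> a < b \<and> b < c)"
  by (auto simp: order_isomorphic_def All_less_Suc2 numeral_3_eq_3 length_Suc_conv)

lemma order_isomorphic_pat_1k:
  "order_isomorphic q (pat_1k k) \<longleftrightarrow>
     (\<exists>x ds. q = x # ds \<and> length ds = k - 1 \<and> sorted_wrt (>) ds \<and> (\<forall>d\<in>set ds. x < d))"
proof (cases q)
  case Nil
  then show ?thesis by (simp add: order_isomorphic_def pat_1k_def)
next
  case (Cons x ds)
  have "sorted_wrt (>) (rev [2..<Suc k])"
    by (simp add: sorted_wrt_rev del: upt_Suc)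
  then show ?thesis
    unfolding Cons pat_1k_def by (subst order_isomorphic_Cons_below_decreasing) auto
qed

lemma contains_123_iff:
  "contains w [1, 2, 3] \<longleftrightarrow> (\<exists>a b c. subseq [a, b, c] w \<and> a < b \<and> b < c)"
  unfolding contains_iff_subseq order_isomorphic_123 by blast

lemma contains_pat_1k_iff:
  "contains w (pat_1k k) \<longleftrightarrow>
     (\<exists>x ds. subseq (x # ds) w \<and> length ds = k - 1 \<and> sorted_wrt (>) ds \<and> (\<forall>d\<in>set ds. x < d))"
  unfolding contains_iff_subseq order_isomorphic_pat_1k by blast

lemma contains_drop_head_ge_next:
  assumes "\<forall>z\<in>set p. y < z" "x' \<le> x" "contains (x # x' # w) (y # p)"
  shows "contains (x' # w) (y # p)"
proof -
  obtain q where q: "subseq q (x # x' # w)" "order_isomorphic q (y # p)"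
    using assms(3) unfolding contains_iff_subseq by blast
  have len: "length q = Suc (length p)"
    using q(2) by (simp add: order_isomorphic_def)
  then obtain z q' where zq': "q = z # q'"
    by (cases q) auto
  show ?thesis
  proof (cases "z = x")
    case False
    have "subseq q (x' # w)"
      using q(1) False unfolding zq' by (rule subseq_Cons2_neq)
    then show ?thesis
      using q(2) by (rule contains_if_subseq)
  next
    case True
    have "subseq q' w"
    proof (cases q')
      case (Cons u q'')
      have "u \<noteq> x'"
      proof
        assume "u = x'"
        have "p \<noteq> []"
          using len zq' Cons by auto
        then have "y < p ! 0"
          using assms(1) by simp
        then have "x < x'"
          using q(2) \<open>p \<noteq> []\<close> unfolding zq' Cons True \<open>u = x'\<close> order_isomorphic_Cons
          by auto
        then show False
          using assms(2) by simp
      qed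
      then show ?thesis
        using q(1) unfolding zq' Cons True by simp
    qed simp
    then have "subseq (x' # q') (x' # w)"
      by simp
    moreover have "order_isomorphic (x' # q') (y # p)"
      using q(2) assms(1,2) unfolding zq' True by (rule order_isomorphic_lower_head)
    ultimately show ?thesis
      by (rule contains_if_subseq)
  qed
qed

lemma contains_123_drop_max:
  assumes "\<forall>z\<in>set w. z \<le> m" "contains (u # m # w) [1, 2, 3]"
  shows "contains (u # w) [1, 2, 3]"
proof -
  obtain a b c where abc: "subseq [a, b, c] (u # m # w)" "a < b" "b < c"
    using assms(2) unfolding contains_123_iff by blast
  have "subseq [a, b, c] (u # w)"
  proof (cases "a = u")
    case True
    have sub: "subseq [b, c] (m # w)"
      using abc(1) unfolding True by (rule subseq_Cons2')
    moreover have "b \<noteq> m"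
      using assms(1) abc(3) set_mono_subseq[OF sub] by force
    ultimately have "subseq [b, c] w"
      by (rule subseq_Cons2_neq)
    then show ?thesis
      using True by simp
  next
    case False
    have sub: "subseq [a, b, c] (m # w)"
      using abc(1) False by (rule subseq_Cons2_neq)
    moreover have "a \<noteq> m"
      using assms(1) abc(2,3) set_mono_subseq[OF sub] by force
    ultimately have "subseq [a, b, c] w"
      by (rule subseq_Cons2_neq)
    then show ?thesis
      by (rule list_emb_Cons)
  qed
  then show ?thesis
    using abc(2,3) unfolding contains_123_iff by blast
qed

lemma length_decreasing_between_le:
  fixes es :: "nat list"
  assumes "sorted_wrt (>) es" "\<forall>e\<in>set es. u < e \<and> e < m"
  shows "length es \<le> m - u - 1"
proof -
  have "distinct es"
    using assms(1) by (induction es) auto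
  then have "length es = card (set es)"
    by (simp add: distinct_card)
  also have "\<dots> \<le> card {u<..<m}"
    using assms(2) by (intro card_mono) auto
  finally show ?thesis
    by simp
qed

lemma contains_pat_1k_drop_max:
  assumes "u < m" "m + 2 \<le> u + k" "\<forall>z\<in>set w. z \<le> m" "contains (u # m # w) (pat_1k k)"
  shows "contains (u # w) (pat_1k k)"
proof -
  obtain x ds where xds: "subseq (x # ds) (u # m # w)" "length ds = k - 1" "sorted_wrt (>) ds"
    "\<forall>d\<in>set ds. x < d"
    using assms(4) unfolding contains_pat_1k_iff by blast
  obtain d es where ds: "ds = d # es"
    using xds(2) assms(1,2) by (cases ds) auto
  have "subseq (x # ds) (u # w)"
  proof (cases "x = u")
    case True
    have sub: "subseq (d # es) (m # w)"
      using xds(1) unfolding ds True by (rule subseq_Cons2')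
    have "d \<noteq> m"
    proof
      assume "d = m"
      then have "\<forall>e\<in>set es. u < e \<and> e < m"
        using xds(3,4) ds True by auto
      then have "length es \<le> m - u - 1"
        using length_decreasing_between_le xds(3) ds by auto
      then show False
        using xds(2) ds assms(1,2) by simp
    qed
    with sub have "subseq ds w"
      unfolding ds by (rule subseq_Cons2_neq)
    then show ?thesis
      using True by simp
  next
    case False
    have sub: "subseq (x # ds) (m # w)"
      using xds(1) False by (rule subseq_Cons2_neq)
    have "x \<noteq> m"
      using assms(3) xds(4) ds set_mono_subseq[OF sub] by force
    with sub have "subseq (x # ds) w"
      by (rule subseq_Cons2_neq)
    then show ?thesis
      by (rule list_emb_Cons)
  qed
  then show ?thesis
    using xds(2-4) unfolding contains_pat_1k_iff by blast
qed

lemma decreasing_above_head_subseq: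
  assumes "\<not> contains (x # w) [1, 2, 3]" "sorted_wrt (>) ds" "set ds \<subseteq> set w" "\<forall>d\<in>set ds. x < d"
  shows "subseq ds w"
  using assms
proof (induction w arbitrary: ds)
  case Nil
  then show ?case by simp
next
  case (Cons y v)
  have no123: "\<not> contains (x # v) [1, 2, 3]"
    using Cons.prems(1) contains_subseq_mono[of "x # v" "x # y # v"] by auto
  show ?case
  proof (cases ds)
    case (Cons d es)
    show ?thesis
    proof (cases "d = y")
      case True
      then have "set es \<subseteq> set v"
        using Cons.prems(2,3) \<open>ds = d # es\<close> by auto
      then show ?thesis
        using Cons.IH[OF no123] Cons.prems(2,4) \<open>ds = d # es\<close> True by simp
    next
      case False
      have "y \<notin> set ds"
      proof
        assume "y \<in> set ds"
        then have "x < y" "y < d" "d \<in> set v"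
          using Cons.prems(2-4) \<open>ds = d # es\<close> False by auto
        moreover have "subseq [x, y, d] (x # y # v)"
          using \<open>d \<in> set v\<close> by (simp add: subseq_singleton_left)
        ultimately have "contains (x # y # v) [1, 2, 3]"
          unfolding contains_123_iff by blast
        then show False
          using Cons.prems(1) by blast
      qed
      then have "subseq ds v"
        using Cons.IH[OF no123] Cons.prems(2-4) by auto
      then show ?thesis
        by (rule list_emb_Cons)
    qed
  qed simp
qed

definition avoids_123_1k :: "nat \<Rightarrow> nat list \<Rightarrow> bool" where
  "avoids_123_1k k w \<longleftrightarrow> avoids w [1, 2, 3] \<and> avoids w (pat_1k k)"

lemma avoids_123_1k_subseq: "subseq v w \<Longrightarrow> avoids_123_1k k w \<Longrightarrow> avoids_123_1k k v"
  unfolding avoids_123_1k_def avoids_def by (meson contains_subseq_mono)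

lemma avoids_123_1k_Cons: "avoids_123_1k k (x # w) \<Longrightarrow> avoids_123_1k k w"
  by (rule avoids_123_1k_subseq[OF subseq_Cons_self])

lemma avoids_123_1k_drop_second: "avoids_123_1k k (u # m # w) \<Longrightarrow> avoids_123_1k k (u # w)"
  by (rule avoids_123_1k_subseq) (simp_all add: subseq_Cons_self)

lemma avoids_123_1k_Cons_ge_head:
  assumes "x' \<le> x" "avoids_123_1k k (x' # w)"
  shows "avoids_123_1k k (x # x' # w)"
proof -
  have "\<not> contains (x # x' # w) (1 # p)" if "\<forall>z\<in>set p. 1 < z" "\<not> contains (x' # w) (1 # p)" for p
    using contains_drop_head_ge_next[OF that(1) assms(1)] that(2) by blast
  from this[of "[2, 3]"] this[of "rev [2..<Suc k]"] show ?thesis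
    using assms(2) unfolding avoids_123_1k_def avoids_def pat_1k_def by auto
qed

lemma avoids_123_1k_insert_max:
  assumes "u < m" "m + 2 \<le> u + k" "\<forall>z\<in>set w. z \<le> m" "avoids_123_1k k (u # w)"
  shows "avoids_123_1k k (u # m # w)"
  using assms contains_123_drop_max contains_pat_1k_drop_max
  unfolding avoids_123_1k_def avoids_def by blast

lemma card_letters_above_head:
  assumes "avoids_123_1k k (x # w)"
  shows "card {d \<in> set w. x < d} \<le> k - 2"
proof (rule ccontr)
  define D where "D = {d \<in> set w. x < d}"
  define ds where "ds = take (k - 1) (rev (sorted_list_of_set D))"
  assume "\<not> card {d \<in> set w. x < d} \<le> k - 2"
  then have "length ds = k - 1"
    unfolding ds_def D_def by simp
  moreover have "sorted_wrt (>) ds"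
    unfolding ds_def by (simp add: sorted_wrt_take sorted_wrt_rev)
  moreover have "set ds \<subseteq> D"
    unfolding ds_def D_def by (auto dest: in_set_takeD)
  moreover have "subseq ds w"
    using assms calculation(2,3)
    by (intro decreasing_above_head_subseq) (auto simp: avoids_123_1k_def avoids_def D_def)
  ultimately have "contains (x # w) (pat_1k k)"
    unfolding contains_pat_1k_iff D_def by (intro exI[of _ x] exI[of _ ds]) auto
  then show False
    using assms by (simp add: avoids_123_1k_def avoids_def)
qed

lemma count_list_Cons_eq_iff:
  "(\<forall>c. count_list (x # w) c = M c) \<longleftrightarrow> 0 < M x \<and> (\<forall>c. count_list w c = (M(x := M x - 1)) c)"
proof
  assume h: "\<forall>c. count_list (x # w) c = M c"
  have "count_list w c = (M(x := M x - 1)) c" for c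
    using h[rule_format, of c] by (cases "c = x") auto
  moreover have "0 < M x"
    using h[rule_format, of x] by simp
  ultimately show "0 < M x \<and> (\<forall>c. count_list w c = (M(x := M x - 1)) c)"
    by blast
next
  assume h: "0 < M x \<and> (\<forall>c. count_list w c = (M(x := M x - 1)) c)"
  show "\<forall>c. count_list (x # w) c = M c"
  proof
    fix c
    have "count_list w c = (M(x := M x - 1)) c"
      using h by blast
    then show "count_list (x # w) c = M c"
      using h by (cases "c = x") auto
  qed
qed

lemma finite_words_with_counts: "finite {w. \<forall>c. count_list w c = M c}"
proof (cases "\<exists>w0. \<forall>c. count_list w0 c = M c")
  case True
  then obtain w0 where w0: "\<forall>c. count_list w0 c = M c"
    by blast
  have "{w. \<forall>c. count_list w c = M c} \<subseteq> {w. set w \<subseteq> set w0 \<and> length w = length w0}"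
  proof safe
    fix w assume w: "\<forall>c. count_list w c = M c"
    then show set_eq: "z \<in> set w \<Longrightarrow> z \<in> set w0" for z
      using w0 by (metis count_list_0_iff)
    have "length w = sum (count_list w) (set w0)"
      using set_eq by (intro sum_count_set[symmetric]) auto
    also have "\<dots> = sum (count_list w0) (set w0)"
      using w w0 by simp
    also have "\<dots> = length w0"
      by (simp add: sum_count_set)
    finally show "length w = length w0" .
  qed
  then show ?thesis
    using finite_lists_length_eq[of "set w0" "length w0"] by (rule finite_subset) simp
next
  case False
  then have "{w. \<forall>c. count_list w c = M c} = {}"
    by blast
  then show ?thesis
    by (metis finite.emptyI)
qed

lemma mult_eq_0_outside: "c \<notin> {1..a + 1 + length L} \<Longrightarrow> mult r a b L c = 0"
  by (auto simp: mult_def)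

lemma mult_pos:
  assumes "0 < r" "0 < b" "\<forall>l\<in>set L. 0 < l" "c \<in> {1..a + 1 + length L}"
  shows "0 < mult r a b L c"
proof (cases "a + 2 \<le> c")
  case True
  then have "L ! (c - (a + 2)) \<in> set L"
    using assms(4) by (intro nth_mem) auto
  then show ?thesis
    using assms True by (auto simp: mult_def)
qed (use assms in \<open>auto simp: mult_def\<close>)

lemma mult_last: "L \<noteq> [] \<Longrightarrow> mult r a b L (a + 1 + length L) = last L"
  by (cases L rule: rev_cases) (auto simp: mult_def nth_append)

lemma mult_replicate_Cons:
  assumes "1 \<le> i" "i \<le> a"
  shows "mult r (i - 1) (r - 1) (replicate (a - i) r @ b # L) = (mult r a b L)(i := r - 1)"
proof
  fix c
  let ?L' = "replicate (a - i) r @ b # L"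
  consider "c < i" | "c = i" | "i < c \<and> c \<le> a" | "c = a + 1" | "a + 1 < c"
    by linarith
  then show "mult r (i - 1) (r - 1) ?L' c = ((mult r a b L)(i := r - 1)) c"
  proof cases
    case 3
    then have "c - (i - 1 + 2) < a - i"
      using assms by linarith
    then have "?L' ! (c - (i - 1 + 2)) = r"
      by (simp add: nth_append)
    then show ?thesis
      using 3 assms by (auto simp: mult_def)
  next
    case 4
    then have "c - (i - 1 + 2) = a - i"
      using assms by linarith
    then have "?L' ! (c - (i - 1 + 2)) = b"
      by (simp add: nth_append)
    then show ?thesis
      using 4 assms by (auto simp: mult_def)
  next
    case 5
    then have idx: "c - (i - 1 + 2) = (a - i) + Suc (c - (a + 2))"
      using assms by simp
    have "?L' ! ((a - i) + Suc (c - (a + 2))) = L ! (c - (a + 2))"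
      by (simp add: nth_append)
    then have "?L' ! (c - (i - 1 + 2)) = L ! (c - (a + 2))"
      unfolding idx .
    then show ?thesis
      using 5 assms by (auto simp: mult_def)
  qed (use assms in \<open>auto simp: mult_def\<close>)
qed

lemma mult_b_minus_1: "mult r a (b - 1) L = (mult r a b L)(a + 1 := b - 1)"
  by (auto simp: mult_def)

lemma mult_Rdel_last:
  assumes "L \<noteq> []" "\<forall>l\<in>set L. 0 < l"
  shows "mult r a b (Rdel (butlast L @ [last L - 1])) = (mult r a b L)(a + 1 + length L := last L - 1)"
proof -
  obtain L0 l where L: "L = L0 @ [l]"
    using assms(1) by (cases L rule: rev_cases) auto
  have "Rdel L0 = L0"
    using assms(2) L by (simp add: Rdel_def filter_id_conv)
  then have "Rdel (butlast L @ [last L - 1]) = (if l = 1 then L0 else L0 @ [l - 1])"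
    using assms(2) L by (auto simp: Rdel_def)
  then show ?thesis
    unfolding L by (auto simp: fun_eq_iff mult_def nth_append)
qed

lemma set_subset_if_counts_mult:
  "\<forall>c. count_list w c = mult r a b L c \<Longrightarrow> set w \<subseteq> {1..a + 1 + length L}"
  by (metis count_list_0_iff mult_eq_0_outside subsetI)

lemma set_eq_if_counts_mult:
  assumes "\<forall>c. count_list w c = mult r a b L c" "0 < r" "0 < b" "\<forall>l\<in>set L. 0 < l"
  shows "set w = {1..a + 1 + length L}"
  using set_subset_if_counts_mult[OF assms(1)] mult_pos[OF assms(2-4)] assms(1)
  by (metis count_list_0_iff less_numeral_extra(3) subset_antisym subsetI)

lemma good_words_iff:
  "w \<in> good_words k r a b L \<longleftrightarrow>
     (\<forall>c. count_list w c = mult r a b L c) \<and> avoids_123_1k k w \<and> avoids_123_1k k ((a + 1) # w)"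
  by (auto simp: good_words_def avoids_123_1k_def)

lemma finite_good_words: "finite (good_words k r a b L)"
  by (rule finite_subset[OF _ finite_words_with_counts[of "mult r a b L"]])
    (auto simp: good_words_def)

lemma good_words_Cons_le_a:
  assumes "1 \<le> i" "i \<le> a" "0 < r"
  shows "i # w \<in> good_words k r a b L \<longleftrightarrow>
    w \<in> good_words k r (i - 1) (r - 1) (replicate (a - i) r @ b # L)"
proof -
  have "mult r a b L i = r"
    using assms(1,2) by (simp add: mult_def)
  then have counts: "(\<forall>c. count_list (i # w) c = mult r a b L c) \<longleftrightarrow>
      (\<forall>c. count_list w c = mult r (i - 1) (r - 1) (replicate (a - i) r @ b # L) c)"
    unfolding count_list_Cons_eq_iff mult_replicate_Cons[OF assms(1,2)] using assms(3) by simp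
  have "avoids_123_1k k (i # w) \<and> avoids_123_1k k ((a + 1) # i # w) \<longleftrightarrow>
      avoids_123_1k k w \<and> avoids_123_1k k (i # w)"
    using assms(2) avoids_123_1k_Cons avoids_123_1k_Cons_ge_head[of i "a + 1"] by auto
  then show ?thesis
    using counts assms(1) by (simp add: good_words_iff)
qed

lemma good_words_Cons_Suc_a:
  assumes "0 < b"
  shows "(a + 1) # w \<in> good_words k r a b L \<longleftrightarrow> w \<in> good_words k r a (b - 1) L"
proof -
  have "mult r a b L (a + 1) = b"
    by (simp add: mult_def)
  then have counts: "(\<forall>c. count_list ((a + 1) # w) c = mult r a b L c) \<longleftrightarrow>
      (\<forall>c. count_list w c = mult r a (b - 1) L c)"
    unfolding count_list_Cons_eq_iff mult_b_minus_1 using assms by simp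
  have "avoids_123_1k k ((a + 1) # w) \<and> avoids_123_1k k ((a + 1) # (a + 1) # w) \<longleftrightarrow>
      avoids_123_1k k w \<and> avoids_123_1k k ((a + 1) # w)"
    using avoids_123_1k_Cons avoids_123_1k_Cons_ge_head[of "a + 1" "a + 1"] by auto
  then show ?thesis
    using counts by (simp add: good_words_iff)
qed

lemma good_words_Cons_max:
  assumes "L \<noteq> []" "\<forall>l\<in>set L. 0 < l" "length L + 2 \<le> k"
  shows "(a + 1 + length L) # w \<in> good_words k r a b L \<longleftrightarrow>
    w \<in> good_words k r a b (Rdel (butlast L @ [last L - 1]))"
proof -
  let ?m = "a + 1 + length L"
  have "mult r a b L ?m = last L"
    using assms(1) by (rule mult_last)
  moreover have "0 < last L"
    using assms(1,2) by simp
  ultimately have counts: "(\<forall>c. count_list (?m # w) c = mult r a b L c) \<longleftrightarrow>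
      (\<forall>c. count_list w c = mult r a b (Rdel (butlast L @ [last L - 1])) c)"
    unfolding count_list_Cons_eq_iff mult_Rdel_last[OF assms(1,2)] by simp
  have "avoids_123_1k k (?m # w) \<and> avoids_123_1k k ((a + 1) # ?m # w) \<longleftrightarrow>
      avoids_123_1k k w \<and> avoids_123_1k k ((a + 1) # w)"
    if "\<forall>c. count_list (?m # w) c = mult r a b L c"
  proof -
    have "\<forall>z\<in>set w. z \<le> ?m"
      using set_subset_if_counts_mult[OF that] by auto
    then have "avoids_123_1k k ((a + 1) # w) \<Longrightarrow> avoids_123_1k k ((a + 1) # ?m # w)"
      using assms(1,3) by (intro avoids_123_1k_insert_max) auto
    then show ?thesis
      using avoids_123_1k_Cons avoids_123_1k_drop_second by blast
  qed
  then show ?thesis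
    using counts by (auto simp: good_words_iff)
qed

lemma good_words_Cons_gt_Suc_a:
  assumes "x # w \<in> good_words k r a b L" "\<forall>l\<in>set L. 0 < l" "a + 1 < x"
  shows "x = a + 1 + length L"
proof (rule ccontr)
  let ?m = "a + 1 + length L"
  assume "x \<noteq> ?m"
  have counts: "\<forall>c. count_list (x # w) c = mult r a b L c"
    using assms(1) by (simp add: good_words_iff)
  then have "x < ?m"
    using set_subset_if_counts_mult[OF counts] \<open>x \<noteq> ?m\<close> by auto
  then have "L \<noteq> []"
    using assms(3) by auto
  then have "0 < count_list (x # w) ?m"
    using counts assms(2) mult_last[of L r a b] by simp
  then have "?m \<in> set w"
    using \<open>x < ?m\<close> count_list_0_iff[of w ?m] by simp
  then have "subseq [a + 1, x, ?m] ((a + 1) # x # w)"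
    by (simp add: subseq_singleton_left)
  then have "contains ((a + 1) # x # w) [1, 2, 3]"
    using assms(3) \<open>x < ?m\<close> unfolding contains_123_iff by blast
  then show False
    using assms(1) by (simp add: good_words_iff avoids_123_1k_def avoids_def)
qed

lemma good_words_Cons_lower_bound:
  assumes "x # w \<in> good_words k r a b L" "0 < r" "0 < b" "\<forall>l\<in>set L. 0 < l"
  shows "a + 1 + length L - x \<le> k - 2"
proof -
  have "\<forall>c. count_list (x # w) c = mult r a b L c"
    using assms(1) unfolding good_words_iff by blast
  then have "set (x # w) = {1..a + 1 + length L}"
    using assms(2-4) by (rule set_eq_if_counts_mult)
  then have "{x<..a + 1 + length L} \<subseteq> {d \<in> set w. x < d}"
    by auto
  then have "card {x<..a + 1 + length L} \<le> card {d \<in> set w. x < d}"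
    by (intro card_mono) auto
  also have "\<dots> \<le> k - 2"
    using assms(1) by (intro card_letters_above_head) (simp add: good_words_iff)
  finally show ?thesis
    by simp
qed

lemma good_words_split_first_letter:
  assumes "0 < r" "0 < b" "\<forall>l\<in>set L. 0 < l" "length L + 2 \<le> k"
  shows "good_words k r a b L =
    (\<Union>i\<in>{max 1 (a + length L + 1 - (k - 2))..a}.
        Cons i ` good_words k r (i - 1) (r - 1) (replicate (a - i) r @ b # L))
    \<union> Cons (a + 1) ` good_words k r a (b - 1) L
    \<union> (if L = [] then {}
       else Cons (a + 1 + length L) ` good_words k r a b (Rdel (butlast L @ [last L - 1])))"
  (is "?G = ?S1 \<union> ?S2 \<union> ?S3")
proof
  show "?G \<subseteq> ?S1 \<union> ?S2 \<union> ?S3"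
  proof
    fix w assume w: "w \<in> ?G"
    then have set_w: "set w = {1..a + 1 + length L}"
      using set_eq_if_counts_mult[OF _ assms(1-3)] unfolding good_words_iff by blast
    then have "w \<noteq> []"
      by auto
    then obtain x w' where "w = x # w'"
      by (cases w) auto
    with set_w have xw': "w = x # w'" "1 \<le> x" "x \<le> a + 1 + length L"
      by auto
    consider "x \<le> a" | "x = a + 1" | "a + 1 < x"
      by linarith
    then show "w \<in> ?S1 \<union> ?S2 \<union> ?S3"
    proof cases
      case 1
      have "a + 1 + length L - x \<le> k - 2"
        using w assms(1-3) unfolding xw'(1) by (rule good_words_Cons_lower_bound)
      then have "x \<in> {max 1 (a + length L + 1 - (k - 2))..a}"
        using xw'(2) 1 by auto
      moreover have "w' \<in> good_words k r (x - 1) (r - 1) (replicate (a - x) r @ b # L)"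
        using w xw'(1,2) 1 assms(1) good_words_Cons_le_a by auto
      ultimately show ?thesis
        using xw'(1) by blast
    next
      case 2
      then show ?thesis
        using w xw'(1) assms(2) good_words_Cons_Suc_a by auto
    next
      case 3
      then have "x = a + 1 + length L"
        using w assms(3) unfolding xw'(1) by (intro good_words_Cons_gt_Suc_a)
      then show ?thesis
        using w xw'(1) 3 assms(3,4) good_words_Cons_max by auto
    qed
  qed
  show "?S1 \<union> ?S2 \<union> ?S3 \<subseteq> ?G"
    using assms good_words_Cons_le_a good_words_Cons_Suc_a good_words_Cons_max
    by (auto split: if_splits)
qed

lemma card_UN_image_Cons:
  assumes "finite I" "\<forall>i\<in>I. finite (S i)"
  shows "card (\<Union>i\<in>I. Cons i ` S i) = (\<Sum>i\<in>I. card (S i))"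
  using assms by (subst card_UN_disjoint) (auto simp: card_image)

theorem theorem2:
  fixes k r a b :: nat and L :: "nat list"
  assumes "k \<ge> 3" and "r \<ge> 1"
    and "b \<ge> 1" and "b \<le> r"
    and "\<forall>l\<in>set L. l > 0"
    and "length L \<le> k - 2"
  shows "A k r a b L =
     (\<Sum>i = max 1 (a + length L + 1 - (k - 2))..a.
         A k r (i - 1) (r - 1) (replicate (a - i) r @ b # L))
     + A k r a (b - 1) L
     + (if length L \<ge> 1 then A k r a b (Rdel (butlast L @ [last L - 1])) else 0)"
proof -
  let ?lo = "max 1 (a + length L + 1 - (k - 2))"
  let ?S1 = "\<Union>i\<in>{?lo..a}. Cons i ` good_words k r (i - 1) (r - 1) (replicate (a - i) r @ b # L)"
  let ?S2 = "Cons (a + 1) ` good_words k r a (b - 1) L"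
  let ?S3 = "if L = [] then {}
    else Cons (a + 1 + length L) ` good_words k r a b (Rdel (butlast L @ [last L - 1]))"
  have "A k r a b L = card (?S1 \<union> ?S2 \<union> ?S3)"
    unfolding A_def using assms by (subst good_words_split_first_letter) auto
  also have "\<dots> = card ?S1 + card ?S2 + card ?S3"
    using finite_good_words by (subst card_Un_disjoint; auto)+
  finally show ?thesis
    unfolding A_def
    by (simp add: card_UN_image_Cons finite_good_words card_image Suc_le_eq)
qed

end
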